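(* Let $G$ be a graph and $k$ a positive integer, and let $X$ be the set of vertices of $G$ that do not lie in any subgraph of $G$ with minimum degree at least $k$. If $|X| \geq k$, then $\sum_{v \in X} \deg_G(v) \leq 2(k-1)|X| - \binom{k}{2}$.
   Context: All graphs are finite, simple and undirected; $\deg_G(v)$ denotes the degree of $v$ in $G$. *)

theory Defs
  imports Main
begin

definition simple_graph :: "'a set \<Rightarrow> ('a \<Rightarrow> 'a \<Rightarrow> bool) \<Rightarrow> bool" where
  "simple_graph V E \<longleftrightarrow> finite V \<and> (\<forall>u v. E u v \<longrightarrow> u \<in> V \<and> v \<in> V)
     \<and> (\<forall>u v. E u v \<longrightarrow> E v u) \<and> (\<forall>v. \<not> E v v)"

definition degree :: "'a set \<Rightarrow> ('a \<Rightarrow> 'a \<Rightarrow> bool) \<Rightarrow> 'a \<Rightarrow> nat" where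
  "degree V E v = card {u \<in> V. E v u}"

definition subgraph :: "'a set \<Rightarrow> ('a \<Rightarrow> 'a \<Rightarrow> bool) \<Rightarrow> 'a set \<Rightarrow> ('a \<Rightarrow> 'a \<Rightarrow> bool) \<Rightarrow> bool" where
  "subgraph W F V E \<longleftrightarrow> W \<subseteq> V \<and> simple_graph W F \<and> (\<forall>u v. F u v \<longrightarrow> E u v)"

definition min_degree_at_least :: "'a set \<Rightarrow> ('a \<Rightarrow> 'a \<Rightarrow> bool) \<Rightarrow> nat \<Rightarrow> bool" where
  "min_degree_at_least W F k \<longleftrightarrow> (\<forall>w\<in>W. degree W F w \<ge> k)"

definition outside_k_subgraphs :: "'a set \<Rightarrow> ('a \<Rightarrow> 'a \<Rightarrow> bool) \<Rightarrow> nat \<Rightarrow> 'a set" where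
  "outside_k_subgraphs V E k =
     {v \<in> V. \<not> (\<exists>W F. subgraph W F V E \<and> min_degree_at_least W F k \<and> v \<in> W)}"

end

theory Submission
  imports Defs
begin

text \<open>A vertex of degree less than \<open>k\<close> lies in no subgraph of minimum degree \<open>k\<close>, so it
  belongs to \<open>X\<close>, and deleting it changes \<open>X\<close> only by removing that vertex. Peeling \<open>X\<close> off one
  low-degree vertex at a time, the vertex \<open>v\<close> removed when \<open>j\<close> vertices of \<open>X\<close> are still left has
  at most \<open>k - 1\<close> neighbours in the remaining graph, and it raises the degree of at most
  \<open>min j (k - 1)\<close> of the remaining vertices of \<open>X\<close>. Hence the degree sum over \<open>X\<close> is at most
  \<open>(k - 1) |X| + (\<Sum>j<|X|. min j (k - 1))\<close>, and for \<open>|X| \<ge> k\<close> the last sum equals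
  \<open>(k - 1) |X| - (k choose 2)\<close>.\<close>

definition remove_vertex :: "('a \<Rightarrow> 'a \<Rightarrow> bool) \<Rightarrow> 'a \<Rightarrow> 'a \<Rightarrow> 'a \<Rightarrow> bool" where
  "remove_vertex E v = (\<lambda>a b. E a b \<and> a \<noteq> v \<and> b \<noteq> v)"

lemma simple_graph_remove_vertex:
  "simple_graph V E \<Longrightarrow> simple_graph (V - {v}) (remove_vertex E v)"
  unfolding simple_graph_def remove_vertex_def by auto

lemma subgraph_remove_vertexI:
  assumes "subgraph W F V E" "v \<notin> W"
  shows "subgraph W F (V - {v}) (remove_vertex E v)"
  using assms unfolding subgraph_def simple_graph_def remove_vertex_def by blast

lemma subgraph_remove_vertexD:
  "subgraph W F (V - {v}) (remove_vertex E v) \<Longrightarrow> subgraph W F V E"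
  unfolding subgraph_def remove_vertex_def by auto

lemma degree_subgraph_le:
  assumes "simple_graph V E" "subgraph W F V E"
  shows "degree W F u \<le> degree V E u"
proof -
  have "{w \<in> W. F u w} \<subseteq> {w \<in> V. E u w}"
    using assms(2) unfolding subgraph_def by auto
  then show ?thesis
    using assms(1) unfolding degree_def simple_graph_def by (simp add: card_mono)
qed

lemma degree_remove_vertex:
  assumes "simple_graph V E" "u \<noteq> v"
  shows "degree V E u = degree (V - {v}) (remove_vertex E v) u + (if E u v then 1 else 0)"
proof -
  have "{w \<in> V. E u w} = {w \<in> V - {v}. remove_vertex E v u w} \<union> (if E u v then {v} else {})"
    using assms unfolding simple_graph_def remove_vertex_def by auto
  then show ?thesis
    using assms(1) unfolding degree_def simple_graph_def by (auto simp: card_insert_if)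
qed

lemma sum_degree_remove_vertex:
  assumes "simple_graph V E" "finite S" "v \<notin> S"
  shows "(\<Sum>u\<in>S. degree V E u)
           = (\<Sum>u\<in>S. degree (V - {v}) (remove_vertex E v) u) + card {u \<in> S. E u v}"
proof -
  have "(\<Sum>u\<in>S. degree V E u)
          = (\<Sum>u\<in>S. degree (V - {v}) (remove_vertex E v) u + (if E u v then 1 else 0))"
  proof (rule sum.cong)
    fix u assume "u \<in> S"
    with assms(3) show "degree V E u
        = degree (V - {v}) (remove_vertex E v) u + (if E u v then 1 else 0)"
      by (intro degree_remove_vertex[OF assms(1)]) auto
  qed simp
  also have "\<dots> = (\<Sum>u\<in>S. degree (V - {v}) (remove_vertex E v) u) + card {u \<in> S. E u v}"
    using assms(2) by (simp add: sum.distrib sum.If_cases Int_def)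
  finally show ?thesis .
qed

lemma card_neighbours_le_degree:
  assumes "simple_graph V E" "S \<subseteq> V"
  shows "card {u \<in> S. E u v} \<le> degree V E v"
proof -
  have "{u \<in> S. E u v} \<subseteq> {w \<in> V. E v w}"
    using assms unfolding simple_graph_def by auto
  then show ?thesis
    using assms(1) unfolding degree_def simple_graph_def by (simp add: card_mono)
qed

lemma min_degree_subgraph_avoids_low_vertex:
  assumes "simple_graph V E" "subgraph W F V E" "min_degree_at_least W F k"
    and "degree V E v < k"
  shows "v \<notin> W"
  using assms degree_subgraph_le[OF assms(1,2), of v]
  unfolding min_degree_at_least_def by fastforce

lemma low_degree_in_outside_k_subgraphs:
  assumes "simple_graph V E" "v \<in> V" "degree V E v < k"
  shows "v \<in> outside_k_subgraphs V E k"
  using assms(2) min_degree_subgraph_avoids_low_vertex[OF assms(1) _ _ assms(3)]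
  unfolding outside_k_subgraphs_def by auto

lemma outside_k_subgraphs_empty_if_min_degree:
  assumes "simple_graph V E" "min_degree_at_least V E k"
  shows "outside_k_subgraphs V E k = {}"
proof -
  have "subgraph V E V E"
    using assms(1) unfolding subgraph_def by auto
  then show ?thesis
    using assms(2) unfolding outside_k_subgraphs_def by blast
qed

lemma outside_k_subgraphs_remove_vertex:
  assumes "simple_graph V E" "degree V E v < k"
  shows "outside_k_subgraphs (V - {v}) (remove_vertex E v) k = outside_k_subgraphs V E k - {v}"
proof -
  have "(\<exists>W F. subgraph W F (V - {v}) (remove_vertex E v) \<and> min_degree_at_least W F k \<and> u \<in> W)
    \<longleftrightarrow> (\<exists>W F. subgraph W F V E \<and> min_degree_at_least W F k \<and> u \<in> W)" for u
    using subgraph_remove_vertexD subgraph_remove_vertexI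
      min_degree_subgraph_avoids_low_vertex[OF assms(1) _ _ assms(2)] by metis
  then show ?thesis
    unfolding outside_k_subgraphs_def by auto
qed

lemma sum_min_eq_choose_two:
  fixes k m :: nat
  assumes "k \<le> m"
  shows "(\<Sum>j<m. min j (k - 1)) + (k choose 2) = (k - 1) * m"
  using assms
proof (induction rule: dec_induct)
  case base
  have "(\<Sum>j<k. min j (k - 1)) = (\<Sum>j<k. j)"
    by (intro sum.cong) auto
  moreover have "(\<Sum>j<n. j) + (n choose 2) = (n - 1) * n" for n :: nat
    by (induction n) (auto simp: numeral_2_eq_2 algebra_simps)
  ultimately show ?case
    by simp
next
  case (step m)
  then show ?case
    by (cases k) (simp_all add: algebra_simps)
qed

lemma sum_degree_outside_k_subgraphs_le:
  assumes "simple_graph V E"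
  shows "(\<Sum>u\<in>outside_k_subgraphs V E k. degree V E u)
           \<le> (k - 1) * card (outside_k_subgraphs V E k)
             + (\<Sum>j<card (outside_k_subgraphs V E k). min j (k - 1))"
  using assms
proof (induction "card V" arbitrary: V E rule: less_induct)
  case less
  let ?X = "outside_k_subgraphs V E k"
  show ?case
  proof (cases "?X = {}")
    case False
    then have "\<not> min_degree_at_least V E k"
      using outside_k_subgraphs_empty_if_min_degree[OF less.prems] by blast
    then obtain v where v: "v \<in> V" "degree V E v < k"
      unfolding min_degree_at_least_def by (auto simp: not_le)
    let ?X' = "outside_k_subgraphs (V - {v}) (remove_vertex E v) k"
    have fin: "finite V"
      using less.prems unfolding simple_graph_def by blast
    have XV: "?X \<subseteq> V"
      unfolding outside_k_subgraphs_def by blast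
    have X': "?X' = ?X - {v}"
      using outside_k_subgraphs_remove_vertex[OF less.prems v(2)] .
    have vX: "v \<in> ?X"
      using low_degree_in_outside_k_subgraphs[OF less.prems v] .
    have finX: "finite ?X"
      using XV fin finite_subset by blast
    have finX': "finite ?X'"
      using X' finX by simp
    have card_X: "card ?X = Suc (card ?X')"
      using card_Suc_Diff1[OF finX vX] X' by simp
    have IH: "(\<Sum>u\<in>?X'. degree (V - {v}) (remove_vertex E v) u)
                \<le> (k - 1) * card ?X' + (\<Sum>j<card ?X'. min j (k - 1))"
      using less.hyps[OF card_Diff1_less[OF fin v(1)] simple_graph_remove_vertex[OF less.prems]] .
    have "card {u \<in> ?X'. E u v} \<le> card ?X'"
      using finX' by (simp add: card_mono)
    moreover have "card {u \<in> ?X'. E u v} \<le> degree V E v"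
      using card_neighbours_le_degree[OF less.prems] X' XV by blast
    moreover have "(\<Sum>u\<in>?X. degree V E u) = degree V E v + (\<Sum>u\<in>?X'. degree V E u)"
      using X' sum.remove[OF finX vX] by simp
    ultimately have "(\<Sum>u\<in>?X. degree V E u)
        \<le> (k - 1) + (k - 1) * card ?X' + (\<Sum>j<card ?X'. min j (k - 1)) + min (card ?X') (k - 1)"
      using sum_degree_remove_vertex[OF less.prems finX', of v] IH v(2) X' by simp
    then show ?thesis
      unfolding card_X by (simp add: algebra_simps)
  qed simp
qed

theorem lemma2p2:
  fixes V :: "'a set" and E :: "'a \<Rightarrow> 'a \<Rightarrow> bool" and k :: nat
  assumes "simple_graph V E"
    and "k \<ge> 1"
    and "card (outside_k_subgraphs V E k) \<ge> k"
  shows "int (\<Sum>v\<in>outside_k_subgraphs V E k. degree V E v)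
           \<le> 2 * (int k - 1) * int (card (outside_k_subgraphs V E k)) - int (k choose 2)"
proof -
  let ?m = "card (outside_k_subgraphs V E k)"
  have "(\<Sum>v\<in>outside_k_subgraphs V E k. degree V E v) + (k choose 2) \<le> 2 * ((k - 1) * ?m)"
    using sum_degree_outside_k_subgraphs_le[OF assms(1), where k = k]
      sum_min_eq_choose_two[OF assms(3)] by linarith
  then have "int (\<Sum>v\<in>outside_k_subgraphs V E k. degree V E v) + int (k choose 2)
               \<le> 2 * int (k - 1) * int ?m"
    by (metis of_nat_add of_nat_le_iff of_nat_mult of_nat_numeral mult.assoc)
  then show ?thesis
    using assms(2) by (simp add: of_nat_diff)
qed

end
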